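(* Consider the iterates of AS-ALM and fix $k\ge0$ with $\eta_k\in(0,1/\nu)$. Then for all $w=(x;\lambda)\in\Omega$, $$f(x)-f(x^{k+1})+(w-\tilde w^k)^\top\mathcal J(w)\ge\frac12\Big\{\|w-w^{k+1}\|_{\tilde Q_k}^2-\|w-w^k\|_{\tilde Q_k}^2+\|w^k-\tilde w^k\|_{\tilde G_k}^2\Big\}+\zeta^k(x),$$ where $\tilde Q_k=\begin{bmatrix}\mathcal D_k&0\\0&\frac1{s\beta}I\end{bmatrix}$ and $\tilde G_k=\begin{bmatrix}\mathcal D_k&0\\0&\frac{2-s}{\beta}I\end{bmatrix}$.
   Context: Setting. $\mathcal X\subset\mathbb R^{n_1}$ is a nonempty closed convex set; $A\in\mathbb R^{n\times n_1}$, $b\in\mathbb R^n$; $f=\frac1N\sum_{j=1}^Nf_j$, each $f_j$ real-valued, convex and continuously differentiable on an open set containing $\mathcal X$. The problem is $\min\{f(x):Ax=b,\ x\in\mathcal X\}$. A fixed symmetric positive definite $H$ and a constant $\nu>0$ satisfy $\|\nabla f_j(x_1)-\nabla f_j(x_2)\|_{H^{-1}}\le\nu\|x_1-x_2\|_H$ for all $x_1,x_2\in\mathcal X$ and all $j$. For symmetric $G$, $\|v\|_G^2:=v^\top Gv$; $G_1\succeq G_2$ means $G_1-G_2$ is positive semidefinite. Subroutine xsub. Inputs: $x^k\in\mathcal X$, $\breve x^k$, $h\in\mathbb R^{n_1}$, an integer $m_k\ge1$, $\eta_k>0$, a symmetric matrix $M_k$. Set $x_1=x^k$, $\breve x_1=\breve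 x^k$. For $t=1,\dots,m_k$: draw $\xi_t$ uniformly from $\{1,\dots,N\}$, independently of everything generated before; set $\beta_t=2/(t+1)$, $\gamma_t=2/(t\eta_k)$, $\hat x_t=\beta_t\breve x_t+(1-\beta_t)x_t$, $d_t=\nabla f_{\xi_t}(\hat x_t)+e_t$ where $e_t$ is a random vector whose conditional expectation given all previously generated random quantities and $\xi_t$ is $0$; $\breve x_{t+1}=\arg\min_{x\in\mathcal X}\{\langle d_t+h,x\rangle+\frac{\gamma_t}2\|x-\breve x_t\|_H^2+\frac12\|x-x^k\|_{M_k}^2\}$; $x_{t+1}=\beta_t\breve x_{t+1}+(1-\beta_t)x_t$. Output $x^{k+1}=x_{m_k+1}$, $\breve x^{k+1}=\breve x_{m_k+1}$. Put $\delta_t=\nabla f(\hat x_t)-d_t$ (inner quantities of outer iteration $k$), and for $x\in\mathcal X$ $$\zeta^k(x)=\frac{2}{m_k(m_k+1)}\Big[\frac1{\eta_k}\big(\|x-\breve x^{k+1}\|_H^2-\|x-\breve x^k\|_H^2\big)-\sum_{t=1}^{m_k}t\langle\delta_t,\breve x_t-x\rangle-\frac{\eta_k}{4(1-\eta_k\nu)}\sum_{t=1}^{m_k}t^2\|\delta_t\|_{H^{-1}}^2\Big].$$ Algorithm AS-ALM. Parameters: $\beta>0$, $s\in(0,2]$, the matrix $H$. Start: $(x^0,\lambda^0)\in\mathcal X\times\mathbb R^n$, $\breve x^0=x^0$. For $k=0,1,\dots$: choose an integer $m_k\ge1$, $\eta_k>0$ and a symmetric $M_k$ with $\mathcal D_k:=M_k-\beta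 A^\top A\succeq0$; set $h^k=-A^\top[\lambda^k-\beta(Ax^k-b)]$; compute $(x^{k+1},\breve x^{k+1})$ by xsub with inputs $x^k,\breve x^k,h^k,m_k,\eta_k,M_k$; $\lambda^{k+1}=\lambda^k-s\beta(Ax^{k+1}-b)$. Notation. $\Omega=\mathcal X\times\mathbb R^n$; $w=(x;\lambda)$; $\mathcal J(w)=(-A^\top\lambda;\,Ax-b)$; $w^k=(x^k;\lambda^k)$; $\tilde\lambda^k=\lambda^k-\beta(Ax^{k+1}-b)$; $\tilde w^k=(x^{k+1};\tilde\lambda^k)$. *)

theory Defs
  imports "HOL-Analysis.Analysis"
begin

definition qsq :: "real^'n^'n \<Rightarrow> real^'n \<Rightarrow> real" where
  "qsq G v = v \<bullet> (G *v v)"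

definition qnorm :: "real^'n^'n \<Rightarrow> real^'n \<Rightarrow> real" where
  "qnorm G v = sqrt (qsq G v)"

definition psd :: "real^'n^'n \<Rightarrow> bool" where
  "psd G \<longleftrightarrow> (\<forall>v. qsq G v \<ge> 0)"

definition sym_pd :: "real^'n^'n \<Rightarrow> bool" where
  "sym_pd G \<longleftrightarrow> transpose G = G \<and> (\<forall>v. v \<noteq> 0 \<longrightarrow> qsq G v > 0)"

definition betaI :: "nat \<Rightarrow> real" where
  "betaI t = 2 / (real t + 1)"

definition gammaI :: "real \<Rightarrow> nat \<Rightarrow> real" where
  "gammaI eta t = 2 / (real t * eta)"

end

theory Submission
  imports Defs
begin

text \<open>Each inner step of xsub is an accelerated proximal-gradient step for the subproblem
  objective \<open>\<Psi>(z) = f(z) + \<langle>h\<^sup>k, z\<rangle> + \<parallel>z - x\<^sup>k\<parallel>\<^sup>2\<^bsub>M\<^sub>k\<^esub> / 2\<close>.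
  Convexity of \<open>f\<close>, the descent lemma for its \<open>H\<close>-Lipschitz gradient and the three-point
  property of the proximal step give \<open>V\<^sub>t\<^sub>+\<^sub>1 \<le> (1 - \<beta>\<^sub>t) V\<^sub>t + \<beta>\<^sub>t R\<^sub>t\<close> for the gap
  \<open>V\<^sub>t = \<Psi>(x\<^sub>t) - \<Psi>(x) + \<parallel>x - x\<^sub>t\<parallel>\<^sup>2\<^bsub>M\<^sub>k\<^esub> / 2\<close>; the gradient error \<open>\<delta>\<^sub>t\<close> is absorbed
  by Young's inequality, which is where \<open>\<eta>\<^sub>k \<nu> < 1\<close> enters. Weighting by \<open>t(t+1)/2\<close> telescopes
  the recursion to \<open>V\<^sub>m\<^sub>+\<^sub>1 \<le> -\<zeta>\<^sup>k(x)\<close>, and with the multiplier update this bound rearranges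
  algebraically into the stated variational inequality.\<close>

section \<open>Weighted inner products\<close>

definition qinner :: "real^'n^'n \<Rightarrow> real^'n \<Rightarrow> real^'n \<Rightarrow> real" where
  "qinner G u v = u \<bullet> (G *v v)"

lemma qinner_add_left [simp]: "qinner G (u + w) v = qinner G u v + qinner G w v"
  by (simp add: qinner_def inner_add_left)

lemma qinner_add_right [simp]: "qinner G u (v + w) = qinner G u v + qinner G u w"
  by (simp add: qinner_def inner_add_right matrix_vector_right_distrib)

lemma qinner_diff_left [simp]: "qinner G (u - w) v = qinner G u v - qinner G w v"
  by (simp add: qinner_def inner_diff_left)

lemma qinner_diff_right [simp]: "qinner G u (v - w) = qinner G u v - qinner G u w"
  by (simp add: qinner_def inner_diff_right matrix_vector_mult_diff_distrib)

lemma qinner_scaleR_left [simp]: "qinner G (c *\<^sub>R u) v = c * qinner G u v"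
  by (simp add: qinner_def)

lemma qinner_scaleR_right [simp]: "qinner G u (c *\<^sub>R v) = c * qinner G u v"
  by (simp add: qinner_def matrix_vector_mult_scaleR)

lemma qinner_commute: "transpose G = G \<Longrightarrow> qinner G u v = qinner G v u"
  unfolding qinner_def by (metis dot_lmul_matrix inner_commute vector_transpose_matrix)

lemma qsq_eq_qinner: "qsq G v = qinner G v v"
  by (simp add: qsq_def qinner_def)

lemma qinner_diff_matrix: "qinner (G1 - G2) u v = qinner G1 u v - qinner G2 u v"
  by (simp add: qinner_def matrix_vector_mult_diff_rdistrib inner_diff_right)

lemma qinner_scaleR_matrix: "qinner (c *\<^sub>R G) u v = c * qinner G u v"
  by (simp add: qinner_def scaleR_matrix_vector_assoc[symmetric])

lemma qinner_transpose_mult_self: "qinner (transpose A ** A) u v = (A *v u) \<bullet> (A *v v)"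
  unfolding qinner_def
  by (metis matrix_vector_mul_assoc transpose_matrix_vector dot_lmul_matrix inner_commute)

lemma qsq_scaleR: "qsq G (c *\<^sub>R v) = c\<^sup>2 * qsq G v"
  by (simp add: qsq_eq_qinner power2_eq_square)

lemma qsq_minus_commute: "qsq G (u - v) = qsq G (v - u)"
  by (simp add: qsq_eq_qinner algebra_simps)

lemma qsq_convex_combination:
  assumes "transpose G = G"
  shows "qsq G (b *\<^sub>R u + (1 - b) *\<^sub>R v - w)
         = b * qsq G (u - w) + (1 - b) * qsq G (v - w) - b * (1 - b) * qsq G (u - v)"
  using qinner_commute[OF assms]
  by (simp add: qsq_eq_qinner algebra_simps power2_eq_square)

lemma sym_pd_qsq_nonneg: "sym_pd H \<Longrightarrow> 0 \<le> qsq H v"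
  unfolding sym_pd_def by (cases "v = 0") (auto simp: qsq_def intro: less_imp_le)

lemma sym_pd_matrix_inv_right:
  assumes "sym_pd H"
  shows "H ** matrix_inv H = mat 1"
proof -
  have "x = 0" if "H *v x = 0" for x
    using that assms unfolding sym_pd_def qsq_def by force
  then obtain B where "B ** H = mat 1"
    using matrix_left_invertible_ker by blast
  then have "invertible H"
    using invertible_left_inverse by blast
  then have "\<exists>B. H ** B = mat 1 \<and> B ** H = mat 1"
    by (simp add: invertible_def)
  then have "H ** matrix_inv H = mat 1 \<and> matrix_inv H ** H = mat 1"
    unfolding matrix_inv_def by (rule someI_ex)
  then show ?thesis ..
qed

lemma inner_le_qsq_young:
  assumes H: "sym_pd H" and c: "c > 0"
  shows "a \<bullet> b \<le> c/2 * qsq (matrix_inv H) a + 1/(2*c) * qsq H b"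
proof -
  have symH: "transpose H = H" using H by (simp add: sym_pd_def)
  define p where "p = matrix_inv H *v a"
  have Hp: "H *v p = a"
    by (simp add: p_def matrix_vector_mul_assoc sym_pd_matrix_inv_right[OF H])
  have pp: "qinner H p p = qsq (matrix_inv H) a"
    by (simp only: qsq_def qinner_def Hp) (simp add: p_def inner_commute)
  have pb: "qinner H p b = a \<bullet> b"
    using qinner_commute[OF symH, of p b] by (simp add: qinner_def Hp inner_commute)
  have "0 \<le> qsq H (c *\<^sub>R p - b)"
    using sym_pd_qsq_nonneg[OF H] .
  also have "\<dots> = c\<^sup>2 * qsq (matrix_inv H) a - 2 * c * (a \<bullet> b) + qsq H b"
    using qinner_commute[OF symH, of p b] pp pb
    by (simp add: qsq_eq_qinner algebra_simps power2_eq_square)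
  finally show ?thesis
    using c by (simp add: field_simps power2_eq_square)
qed

section \<open>Convexity and smoothness\<close>

lemma nonneg_of_nonneg_perturbation:
  fixes a c :: real
  assumes "\<And>\<theta>. 0 < \<theta> \<Longrightarrow> \<theta> \<le> 1 \<Longrightarrow> 0 \<le> \<theta> * a + \<theta>\<^sup>2 * c"
  shows "0 \<le> a"
proof (rule tendsto_lowerbound)
  show "((\<lambda>\<theta>. a + \<theta> * c) \<longlongrightarrow> a) (at_right 0)"
    by (auto intro!: tendsto_eq_intros)
  show "\<forall>\<^sub>F \<theta> in at_right 0. 0 \<le> a + \<theta> * c"
    using eventually_at_right_real[OF zero_less_one]
  proof eventually_elim
    case (elim \<theta>)
    then have "0 \<le> \<theta> * (a + \<theta> * c)"
      using assms[of \<theta>] by (simp add: power2_eq_square algebra_simps)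
    then show ?case
      using elim by (simp add: zero_le_mult_iff)
  qed
qed simp

lemma prox_three_point:
  fixes H M :: "real^'n^'n"
  assumes symH: "transpose H = H" and symM: "transpose M = M" and X: "convex X"
    and p: "p \<in> X" and z: "z \<in> X"
    and min: "\<forall>w\<in>X. g \<bullet> p + \<gamma>/2 * qsq H (p - a) + 1/2 * qsq M (p - c)
               \<le> g \<bullet> w + \<gamma>/2 * qsq H (w - a) + 1/2 * qsq M (w - c)"
  shows "g \<bullet> p + \<gamma>/2 * qsq H (p - a) + 1/2 * qsq M (p - c) + \<gamma>/2 * qsq H (z - p) + 1/2 * qsq M (z - p)
         \<le> g \<bullet> z + \<gamma>/2 * qsq H (z - a) + 1/2 * qsq M (z - c)"
proof -
  define q where "q w = g \<bullet> w + \<gamma>/2 * qsq H (w - a) + 1/2 * qsq M (w - c)" for w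
  define v where "v = z - p"
  define lin where "lin = g \<bullet> v + \<gamma> * qinner H (p - a) v + qinner M (p - c) v"
  define Q where "Q = \<gamma> * qsq H v + qsq M v"
  have expand: "q (p + \<theta> *\<^sub>R v) = q p + \<theta> * lin + \<theta>\<^sup>2 * (Q/2)" for \<theta>
    unfolding q_def lin_def Q_def qsq_eq_qinner
    by (simp add: qinner_commute[OF symH] qinner_commute[OF symM] algebra_simps power2_eq_square)
  have "0 \<le> lin"
  proof (rule nonneg_of_nonneg_perturbation)
    fix \<theta> :: real assume "0 < \<theta>" "\<theta> \<le> 1"
    then have "(1 - \<theta>) *\<^sub>R p + \<theta> *\<^sub>R z \<in> X"
      using X p z by (intro convexD) auto
    moreover have "(1 - \<theta>) *\<^sub>R p + \<theta> *\<^sub>R z = p + \<theta> *\<^sub>R v"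
      by (simp add: v_def algebra_simps)
    ultimately have "q p \<le> q (p + \<theta> *\<^sub>R v)"
      using min unfolding q_def by auto
    then show "0 \<le> \<theta> * lin + \<theta>\<^sup>2 * (Q/2)"
      using expand by simp
  qed
  moreover have "q z = q p + lin + Q/2"
    using expand[of 1] by (simp add: v_def)
  ultimately show ?thesis
    unfolding q_def Q_def v_def by (simp add: add_divide_distrib)
qed

lemma has_real_derivative_along_line:
  fixes f :: "'a::real_inner \<Rightarrow> real"
  assumes "(f has_derivative (\<lambda>h. g \<bullet> h)) (at (x + t *\<^sub>R v))"
  shows "((\<lambda>s. f (x + s *\<^sub>R v)) has_real_derivative (g \<bullet> v)) (at t)"
proof -
  have "((\<lambda>s. x + s *\<^sub>R v) has_derivative (\<lambda>h. h *\<^sub>R v)) (at t)"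
    by (auto intro!: derivative_eq_intros)
  from has_derivative_compose[OF this assms]
  have "((\<lambda>s. f (x + s *\<^sub>R v)) has_derivative (\<lambda>h. g \<bullet> (h *\<^sub>R v))) (at t)" .
  moreover have "(\<lambda>h. g \<bullet> (h *\<^sub>R v)) = (*) (g \<bullet> v)"
    by (auto simp: fun_eq_iff)
  ultimately show ?thesis
    by (simp add: has_field_derivative_def)
qed

lemma convex_on_gradient_ineq:
  fixes f :: "'a::real_inner \<Rightarrow> real"
  assumes f: "convex_on S f" and x: "x \<in> S" and z: "z \<in> S"
    and der: "(f has_derivative (\<lambda>h. g \<bullet> h)) (at x)"
  shows "f x + g \<bullet> (z - x) \<le> f z"
proof -
  define \<phi> where "\<phi> \<theta> = f (x + \<theta> *\<^sub>R (z - x))" for \<theta>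
  have "(\<phi> has_real_derivative g \<bullet> (z - x)) (at 0 within {0<..})"
    unfolding \<phi>_def
    by (rule has_field_derivative_at_within, rule has_real_derivative_along_line) (simp add: der)
  then have "((\<lambda>\<theta>. (\<phi> \<theta> - \<phi> 0) / \<theta>) \<longlongrightarrow> g \<bullet> (z - x)) (at_right 0)"
    by (simp add: has_field_derivative_iff)
  moreover have "\<forall>\<^sub>F \<theta> in at_right 0. (\<phi> \<theta> - \<phi> 0) / \<theta> \<le> \<phi> 1 - \<phi> 0"
    using eventually_at_right_real[OF zero_less_one]
  proof eventually_elim
    case (elim \<theta>)
    have "x + \<theta> *\<^sub>R (z - x) = (1 - \<theta>) *\<^sub>R x + \<theta> *\<^sub>R z"
      by (simp add: algebra_simps)
    then have "\<phi> \<theta> \<le> (1 - \<theta>) * \<phi> 0 + \<theta> * \<phi> 1"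
      using convex_onD[OF f, of \<theta> x z] elim x z by (simp add: \<phi>_def)
    then show ?case
      using elim by (subst pos_divide_le_eq) (auto simp: algebra_simps)
  qed
  ultimately have "g \<bullet> (z - x) \<le> \<phi> 1 - \<phi> 0"
    by (intro tendsto_upperbound) auto
  then show ?thesis
    by (simp add: \<phi>_def)
qed

lemma inner_le_of_lipschitz:
  assumes H: "sym_pd H" and \<nu>: "\<nu> > 0"
    and Lip: "qnorm (matrix_inv H) g \<le> \<nu> * qnorm H u"
  shows "g \<bullet> u \<le> \<nu> * qsq H u"
proof -
  have "sqrt (qsq (matrix_inv H) g) \<le> sqrt (\<nu>\<^sup>2 * qsq H u)"
    using Lip \<nu> by (simp add: qnorm_def real_sqrt_mult)
  then have lip: "qsq (matrix_inv H) g \<le> \<nu>\<^sup>2 * qsq H u"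
    by simp
  have "g \<bullet> u \<le> (1/\<nu>)/2 * qsq (matrix_inv H) g + 1/(2*(1/\<nu>)) * qsq H u"
    using \<nu> by (intro inner_le_qsq_young[OF H]) simp
  also have "\<dots> \<le> (1/\<nu>)/2 * (\<nu>\<^sup>2 * qsq H u) + 1/(2*(1/\<nu>)) * qsq H u"
    using lip \<nu> by (simp add: divide_right_mono)
  also have "\<dots> = \<nu> * qsq H u"
    using \<nu> by (simp add: field_simps power2_eq_square)
  finally show ?thesis .
qed

lemma descent_lemma:
  fixes f :: "real^'n \<Rightarrow> real"
  assumes X: "convex X"
    and der: "\<And>y. y \<in> X \<Longrightarrow> (f has_derivative (\<lambda>h. gf y \<bullet> h)) (at y)"
    and H: "sym_pd H" and \<nu>: "\<nu> > 0"
    and Lip: "\<And>y1 y2. y1 \<in> X \<Longrightarrow> y2 \<in> X \<Longrightarrow>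
              qnorm (matrix_inv H) (gf y1 - gf y2) \<le> \<nu> * qnorm H (y1 - y2)"
    and x: "x \<in> X" and z: "z \<in> X"
  shows "f z \<le> f x + gf x \<bullet> (z - x) + \<nu>/2 * qsq H (z - x)"
proof -
  define v where "v = z - x"
  define \<phi> where "\<phi> t = f (x + t *\<^sub>R v) - t * (gf x \<bullet> v) - \<nu>/2 * t\<^sup>2 * qsq H v" for t
  have "\<exists>D. (\<phi> has_real_derivative D) (at t) \<and> D \<le> 0" if t: "0 \<le> t" "t \<le> 1" for t
  proof -
    have "(1 - t) *\<^sub>R x + t *\<^sub>R z \<in> X"
      using X x z t by (intro convexD) auto
    then have xt: "x + t *\<^sub>R v \<in> X"
      by (simp add: v_def algebra_simps)
    define G where "G = gf (x + t *\<^sub>R v) - gf x"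
    have "(\<phi> has_real_derivative G \<bullet> v - \<nu> * t * qsq H v) (at t)"
      unfolding \<phi>_def G_def inner_diff_left
      by (intro DERIV_diff has_real_derivative_along_line der[OF xt])
        (auto intro!: derivative_eq_intros)
    moreover have "G \<bullet> v \<le> \<nu> * t * qsq H v"
    proof (cases "t = 0")
      case False
      have "G \<bullet> (t *\<^sub>R v) \<le> \<nu> * qsq H (t *\<^sub>R v)"
        using Lip[OF xt x] unfolding G_def by (intro inner_le_of_lipschitz[OF H \<nu>]) simp
      then have "t * (G \<bullet> v) \<le> t * (\<nu> * t * qsq H v)"
        by (simp add: qsq_scaleR power2_eq_square algebra_simps)
      then show ?thesis
        using False t by simp
    qed (simp add: G_def)
    ultimately show ?thesis
      by auto
  qed
  then have "\<phi> 1 \<le> \<phi> 0"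
    using DERIV_nonpos_imp_nonincreasing[of 0 1 \<phi>] by force
  then show ?thesis
    by (simp add: \<phi>_def v_def)
qed

lemma mean_le_affine:
  fixes a c :: "nat \<Rightarrow> real" and g :: "nat \<Rightarrow> 'a::real_inner"
  assumes N: "N \<ge> 1" and le: "\<And>j. j \<in> {1..N} \<Longrightarrow> a j \<le> c j + g j \<bullet> v + K"
  shows "(1 / real N) * (\<Sum>j=1..N. a j)
         \<le> (1 / real N) * (\<Sum>j=1..N. c j) + ((1 / real N) *\<^sub>R (\<Sum>j=1..N. g j)) \<bullet> v + K"
proof -
  have "(\<Sum>j=1..N. a j) \<le> (\<Sum>j=1..N. c j + g j \<bullet> v + K)"
    by (rule sum_mono) (rule le)
  also have "\<dots> = (\<Sum>j=1..N. c j) + (\<Sum>j=1..N. g j) \<bullet> v + real N * K"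
    by (simp add: sum.distrib inner_sum_left)
  finally show ?thesis
    using N by (simp add: field_simps)
qed

lemma affine_le_mean:
  fixes a c :: "nat \<Rightarrow> real" and g :: "nat \<Rightarrow> 'a::real_inner"
  assumes le: "\<And>j. j \<in> {1..N} \<Longrightarrow> c j + g j \<bullet> v \<le> a j"
  shows "(1 / real N) * (\<Sum>j=1..N. c j) + ((1 / real N) *\<^sub>R (\<Sum>j=1..N. g j)) \<bullet> v
         \<le> (1 / real N) * (\<Sum>j=1..N. a j)"
proof -
  have "(\<Sum>j=1..N. c j) + (\<Sum>j=1..N. g j) \<bullet> v = (\<Sum>j=1..N. c j + g j \<bullet> v)"
    by (simp add: sum.distrib inner_sum_left)
  also have "\<dots> \<le> (\<Sum>j=1..N. a j)"
    by (rule sum_mono) (rule le)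
  finally have "(1 / real N) * ((\<Sum>j=1..N. c j) + (\<Sum>j=1..N. g j) \<bullet> v) \<le> (1 / real N) * (\<Sum>j=1..N. a j)"
    by (rule mult_left_mono) simp
  then show ?thesis
    by (simp add: algebra_simps)
qed

section \<open>The inner loop xsub\<close>

lemma betaI_bounds: "1 \<le> t \<Longrightarrow> 0 < betaI t \<and> betaI t \<le> 1"
  by (simp add: betaI_def)

lemma convex_betaI_combination:
  "convex X \<Longrightarrow> 1 \<le> t \<Longrightarrow> u \<in> X \<Longrightarrow> v \<in> X \<Longrightarrow> betaI t *\<^sub>R u + (1 - betaI t) *\<^sub>R v \<in> X"
  using betaI_bounds[of t] by (intro convexD) auto

lemma interpolated_descent_step:
  fixes F :: "real^'n \<Rightarrow> real"
  assumes b: "0 \<le> b" "b \<le> 1"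
    and xh: "xh = b *\<^sub>R xb + (1 - b) *\<^sub>R xt"
    and x': "x' = b *\<^sub>R xb' + (1 - b) *\<^sub>R xt"
    and desc: "F x' \<le> F xh + g \<bullet> (x' - xh) + L/2 * qsq H (x' - xh)"
    and grad_xt: "F xh + g \<bullet> (xt - xh) \<le> F xt"
    and grad_y: "F xh + g \<bullet> (y - xh) \<le> F y"
  shows "F x' \<le> (1 - b) * F xt + b * (F y + g \<bullet> (xb' - y)) + L/2 * b\<^sup>2 * qsq H (xb' - xb)"
proof -
  have "x' - xh = b *\<^sub>R (xb' - xb)"
    by (simp add: x' xh algebra_simps)
  then have "qsq H (x' - xh) = b\<^sup>2 * qsq H (xb' - xb)"
    by (simp add: qsq_scaleR)
  moreover have "g \<bullet> (x' - xh) = (1 - b) * (g \<bullet> (xt - xh)) + b * (g \<bullet> (y - xh)) + b * (g \<bullet> (xb' - y))"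
    by (simp add: x' algebra_simps)
  moreover have "(1 - b) * (F xh + g \<bullet> (xt - xh)) \<le> (1 - b) * F xt"
    using grad_xt b by (intro mult_left_mono) auto
  moreover have "b * (F xh + g \<bullet> (y - xh)) \<le> b * F y"
    using grad_y b by (intro mult_left_mono) auto
  ultimately show ?thesis
    using desc by (simp add: algebra_simps)
qed

text \<open>Young's inequality with weight \<open>t \<eta> / (2 (1 - \<eta> \<nu>))\<close> leaves exactly the part of the
  \<open>\<gamma>\<^sub>t\<close>-proximal term that the descent lemma has not used up; this is where \<open>\<eta> \<nu> < 1\<close> is needed.\<close>

lemma inner_le_young_gammaI:
  fixes t :: nat
  assumes H: "sym_pd H" and t: "1 \<le> t" and \<eta>: "\<eta> > 0" "\<eta> * \<nu> < 1" and \<nu>: "\<nu> > 0"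
  shows "\<delta> \<bullet> \<Delta> \<le> real t * \<eta> / (4 * (1 - \<eta> * \<nu>)) * qsq (matrix_inv H) \<delta>
                 + (gammaI \<eta> t / 2 - \<nu> * betaI t / 2) * qsq H \<Delta>"
proof -
  define c where "c = real t * \<eta> / (2 * (1 - \<eta> * \<nu>))"
  have c: "c > 0" "c/2 = real t * \<eta> / (4 * (1 - \<eta> * \<nu>))"
    using t \<eta> by (simp_all add: c_def)
  have "1/(2*c) = 1/(real t * \<eta>) - \<nu>/real t"
    using t \<eta> by (simp add: c_def field_simps)
  also have "\<dots> \<le> 1/(real t * \<eta>) - \<nu>/(real t + 1)"
    using t \<nu> by (simp add: divide_left_mono)
  also have "\<dots> = gammaI \<eta> t / 2 - \<nu> * betaI t / 2"
    by (simp add: gammaI_def betaI_def) (simp add: field_simps)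
  finally have "1/(2*c) * qsq H \<Delta> \<le> (gammaI \<eta> t / 2 - \<nu> * betaI t / 2) * qsq H \<Delta>"
    by (intro mult_right_mono sym_pd_qsq_nonneg[OF H])
  then show ?thesis
    using inner_le_qsq_young[OF H c(1), of \<delta> \<Delta>] unfolding c(2) by linarith
qed

lemma xsub_potential_step:
  fixes F :: "real^'n \<Rightarrow> real" and gF :: "real^'n \<Rightarrow> real^'n" and H M :: "real^'n^'n" and t :: nat
  assumes X: "convex X"
    and grad: "\<And>u z. u \<in> X \<Longrightarrow> z \<in> X \<Longrightarrow> F u + gF u \<bullet> (z - u) \<le> F z"
    and desc: "\<And>u z. u \<in> X \<Longrightarrow> z \<in> X \<Longrightarrow> F z \<le> F u + gF u \<bullet> (z - u) + \<nu>/2 * qsq H (z - u)"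
    and H: "sym_pd H" and \<nu>: "\<nu> > 0" and M: "transpose M = M" "\<And>v. 0 \<le> qsq M v"
    and \<eta>: "\<eta> > 0" "\<eta> * \<nu> < 1" and t: "1 \<le> t"
    and in_X: "xt \<in> X" "xbt \<in> X" "xb' \<in> X" "y \<in> X"
    and xh: "xh = betaI t *\<^sub>R xbt + (1 - betaI t) *\<^sub>R xt"
    and x': "x' = betaI t *\<^sub>R xb' + (1 - betaI t) *\<^sub>R xt"
    and min: "\<forall>z\<in>X. (dt + h) \<bullet> xb' + gammaI \<eta> t / 2 * qsq H (xb' - xbt) + 1/2 * qsq M (xb' - x0)
                 \<le> (dt + h) \<bullet> z + gammaI \<eta> t / 2 * qsq H (z - xbt) + 1/2 * qsq M (z - x0)"
  shows "F x' + h \<bullet> x' + 1/2 * qsq M (x' - x0) - (F y + h \<bullet> y + 1/2 * qsq M (y - x0))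
           + 1/2 * qsq M (y - x')
         \<le> (1 - betaI t) * (F xt + h \<bullet> xt + 1/2 * qsq M (xt - x0) - (F y + h \<bullet> y + 1/2 * qsq M (y - x0))
                             + 1/2 * qsq M (y - xt))
           + betaI t * ((gF xh - dt) \<bullet> (xbt - y) + gammaI \<eta> t / 2 * (qsq H (y - xbt) - qsq H (y - xb'))
                        + real t * \<eta> / (4 * (1 - \<eta> * \<nu>)) * qsq (matrix_inv H) (gF xh - dt))"
proof -
  define b g where "b = betaI t" and "g = gammaI \<eta> t"
  define \<delta> \<Delta> where "\<delta> = gF xh - dt" and "\<Delta> = xb' - xbt"
  have b: "0 < b" "b \<le> 1"
    using betaI_bounds[OF t] by (simp_all add: b_def)
  have "xh \<in> X" and "x' \<in> X"
    unfolding xh x' using convex_betaI_combination[OF X t] in_X by simp_all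
  then have desc': "F x' \<le> (1 - b) * F xt + b * (F y + gF xh \<bullet> (xb' - y)) + \<nu>/2 * b\<^sup>2 * qsq H \<Delta>"
    unfolding b_def \<Delta>_def using b xh x' desc grad in_X
    by (intro interpolated_descent_step) (auto simp: b_def)
  have "(dt + h) \<bullet> xb' + g/2 * qsq H \<Delta> + 1/2 * qsq M (xb' - x0) + g/2 * qsq H (y - xb')
          + 1/2 * qsq M (y - xb')
        \<le> (dt + h) \<bullet> y + g/2 * qsq H (y - xbt) + 1/2 * qsq M (y - x0)"
    unfolding g_def \<Delta>_def using H min in_X
    by (intro prox_three_point[OF _ M(1) X]) (auto simp: sym_pd_def)
  then have prox: "b * (dt \<bullet> (xb' - y)) \<le> b * (h \<bullet> (y - xb')
          + g/2 * (qsq H (y - xbt) - qsq H (y - xb') - qsq H \<Delta>)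
          + 1/2 * (qsq M (y - x0) - qsq M (xb' - x0) - qsq M (y - xb')))"
    using b by (intro mult_left_mono) (auto simp: algebra_simps)
  have young: "b * (\<delta> \<bullet> \<Delta>) \<le> b * (real t * \<eta> / (4 * (1 - \<eta> * \<nu>)) * qsq (matrix_inv H) \<delta>
                                   + (g/2 - \<nu> * b/2) * qsq H \<Delta>)"
    using b inner_le_young_gammaI[OF H t \<eta> \<nu>] by (intro mult_left_mono) (auto simp: b_def g_def)
  have "b * (gF xh \<bullet> (xb' - y)) = b * (\<delta> \<bullet> (xbt - y)) + b * (\<delta> \<bullet> \<Delta>) + b * (dt \<bullet> (xb' - y))"
    by (simp add: \<delta>_def \<Delta>_def algebra_simps)
  moreover have "qsq M (x' - x0) = b * qsq M (xb' - x0) + (1 - b) * qsq M (xt - x0) - b * (1 - b) * qsq M (xb' - xt)"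
    unfolding x' b_def by (rule qsq_convex_combination[OF M(1)])
  moreover have "qsq M (y - x') = b * qsq M (y - xb') + (1 - b) * qsq M (y - xt) - b * (1 - b) * qsq M (xb' - xt)"
    using qsq_convex_combination[OF M(1), of b xb' xt y]
    by (simp add: x' b_def qsq_minus_commute[of M y])
  moreover have "0 \<le> b * (1 - b) * qsq M (xb' - xt)"
    using b M(2) by simp
  moreover have "h \<bullet> x' = b * (h \<bullet> xb') + (1 - b) * (h \<bullet> xt)"
    by (simp add: x' b_def inner_add_right)
  ultimately show ?thesis
    using desc' young prox unfolding b_def[symmetric] g_def[symmetric] \<delta>_def[symmetric] \<Delta>_def[symmetric]
    by (simp add: algebra_simps power2_eq_square) argo
qed

text \<open>Since \<open>t(t+1)/2 \<cdot> (1 - \<beta>\<^sub>t) = (t-1)t/2\<close> and \<open>t(t+1)/2 \<cdot> \<beta>\<^sub>t = t\<close>, the weights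
  \<open>t(t+1)/2\<close> turn the recursion into a telescoping sum.\<close>

lemma betaI_weighted_telescope:
  fixes V R :: "nat \<Rightarrow> real"
  assumes step: "\<And>t. 1 \<le> t \<Longrightarrow> t \<le> m \<Longrightarrow> V (Suc t) \<le> (1 - betaI t) * V t + betaI t * R t"
  shows "real m * (real m + 1) / 2 * V (Suc m) \<le> (\<Sum>t=1..m. real t * R t)"
  using step
proof (induction m)
  case (Suc m)
  define K where "K = (real m + 1) * (real m + 2) / 2"
  have "K * V (Suc (Suc m)) \<le> K * ((1 - betaI (Suc m)) * V (Suc m) + betaI (Suc m) * R (Suc m))"
    using Suc.prems[of "Suc m"] by (intro mult_left_mono) (auto simp: K_def)
  also have "\<dots> = K * (1 - betaI (Suc m)) * V (Suc m) + K * betaI (Suc m) * R (Suc m)"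
    by (simp add: algebra_simps)
  also have "\<dots> = real m * (real m + 1) / 2 * V (Suc m) + (real m + 1) * R (Suc m)"
  proof -
    have e1: "K * (1 - betaI (Suc m)) = real m * (real m + 1) / 2"
      by (simp add: K_def betaI_def divide_simps)
    have e2: "K * betaI (Suc m) = real m + 1"
      by (simp add: K_def betaI_def divide_simps)
    show ?thesis
      by (simp only: e1 e2)
  qed
  also have "\<dots> \<le> (\<Sum>t=1..m. real t * R t) + (real m + 1) * R (Suc m)"
    using Suc by simp
  finally show ?case
    by (simp add: K_def algebra_simps)
qed simp

lemma xsub_iterates_in:
  fixes xi xbi :: "nat \<Rightarrow> 'a::real_vector"
  assumes X: "convex X" and start: "xi 1 \<in> X" "xbi 1 \<in> X"
    and xbstep: "\<And>t. 1 \<le> t \<Longrightarrow> t \<le> m \<Longrightarrow> xbi (Suc t) \<in> X"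
    and xstep: "\<And>t. 1 \<le> t \<Longrightarrow> t \<le> m \<Longrightarrow> xi (Suc t) = betaI t *\<^sub>R xbi (Suc t) + (1 - betaI t) *\<^sub>R xi t"
  shows "1 \<le> t \<Longrightarrow> t \<le> Suc m \<Longrightarrow> xi t \<in> X \<and> xbi t \<in> X"
proof (induction t)
  case (Suc t)
  show ?case
  proof (cases "t = 0")
    case False
    then have t: "1 \<le> t" "t \<le> m"
      using Suc.prems by auto
    then show ?thesis
      using Suc.IH xbstep[OF t] xstep[OF t] convex_betaI_combination[OF X t(1)] by simp
  qed (use start in simp)
qed simp

lemma xsub_gap_bound:
  fixes F :: "real^'n \<Rightarrow> real" and gF :: "real^'n \<Rightarrow> real^'n" and H M :: "real^'n^'n"
    and xi xbi xh d :: "nat \<Rightarrow> real^'n"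
  assumes X: "convex X"
    and grad: "\<And>u z. u \<in> X \<Longrightarrow> z \<in> X \<Longrightarrow> F u + gF u \<bullet> (z - u) \<le> F z"
    and desc: "\<And>u z. u \<in> X \<Longrightarrow> z \<in> X \<Longrightarrow> F z \<le> F u + gF u \<bullet> (z - u) + \<nu>/2 * qsq H (z - u)"
    and H: "sym_pd H" and \<nu>: "\<nu> > 0" and M: "transpose M = M" "\<And>v. 0 \<le> qsq M v"
    and \<eta>: "\<eta> > 0" "\<eta> * \<nu> < 1" and m: "m \<ge> 1"
    and start: "xi 1 \<in> X" "xbi 1 \<in> X"
    and xh: "\<And>t. xh t = betaI t *\<^sub>R xbi t + (1 - betaI t) *\<^sub>R xi t"
    and xbstep: "\<And>t. 1 \<le> t \<Longrightarrow> t \<le> m \<Longrightarrow>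
        xbi (Suc t) \<in> X \<and>
        (\<forall>z\<in>X. (d t + h) \<bullet> xbi (Suc t) + gammaI \<eta> t / 2 * qsq H (xbi (Suc t) - xbi t)
                  + 1/2 * qsq M (xbi (Suc t) - x0)
               \<le> (d t + h) \<bullet> z + gammaI \<eta> t / 2 * qsq H (z - xbi t) + 1/2 * qsq M (z - x0))"
    and xstep: "\<And>t. 1 \<le> t \<Longrightarrow> t \<le> m \<Longrightarrow> xi (Suc t) = betaI t *\<^sub>R xbi (Suc t) + (1 - betaI t) *\<^sub>R xi t"
    and y: "y \<in> X"
  shows "F (xi (Suc m)) + h \<bullet> xi (Suc m) + 1/2 * qsq M (xi (Suc m) - x0)
           - (F y + h \<bullet> y + 1/2 * qsq M (y - x0)) + 1/2 * qsq M (y - xi (Suc m))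
         \<le> - (2 / (real m * (real m + 1)) *
              (1 / \<eta> * (qsq H (y - xbi (Suc m)) - qsq H (y - xbi 1))
               - (\<Sum>t=1..m. real t * ((gF (xh t) - d t) \<bullet> (xbi t - y)))
               - \<eta> / (4 * (1 - \<eta> * \<nu>)) * (\<Sum>t=1..m. (real t)\<^sup>2 * qsq (matrix_inv H) (gF (xh t) - d t))))"
proof -
  define \<delta> where "\<delta> t = gF (xh t) - d t" for t
  define V where "V t = F (xi t) + h \<bullet> xi t + 1/2 * qsq M (xi t - x0)
      - (F y + h \<bullet> y + 1/2 * qsq M (y - x0)) + 1/2 * qsq M (y - xi t)" for t
  define R where "R t = \<delta> t \<bullet> (xbi t - y) + gammaI \<eta> t / 2 * (qsq H (y - xbi t) - qsq H (y - xbi (Suc t)))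
      + real t * \<eta> / (4 * (1 - \<eta> * \<nu>)) * qsq (matrix_inv H) (\<delta> t)" for t
  define S where "S = 1 / \<eta> * (qsq H (y - xbi (Suc m)) - qsq H (y - xbi 1))
      - (\<Sum>t=1..m. real t * (\<delta> t \<bullet> (xbi t - y)))
      - \<eta> / (4 * (1 - \<eta> * \<nu>)) * (\<Sum>t=1..m. (real t)\<^sup>2 * qsq (matrix_inv H) (\<delta> t))"
  have iter: "xi t \<in> X \<and> xbi t \<in> X" if "1 \<le> t" "t \<le> Suc m" for t
    using xsub_iterates_in[OF X start _ xstep] xbstep that by blast
  have "V (Suc t) \<le> (1 - betaI t) * V t + betaI t * R t" if t: "1 \<le> t" "t \<le> m" for t
    unfolding V_def R_def \<delta>_def
    using iter[of t] iter[of "Suc t"] t xbstep[OF t]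
    by (intro xsub_potential_step[OF X grad desc H \<nu> M \<eta> t(1) _ _ _ y xh xstep[OF t]]) auto
  then have "real m * (real m + 1) / 2 * V (Suc m) \<le> (\<Sum>t=1..m. real t * R t)"
    by (rule betaI_weighted_telescope)
  also have "\<dots> = - S"
  proof -
    have "(\<Sum>t=1..m. qsq H (y - xbi t) - qsq H (y - xbi (Suc t)))
        = qsq H (y - xbi 1) - qsq H (y - xbi (Suc m))"
      using sum_Suc_diff[of 1 m "\<lambda>t. qsq H (y - xbi t)"] m by (simp add: sum_subtractf)
    moreover have "(\<Sum>t=1..m. real t * R t)
        = (\<Sum>t=1..m. real t * (\<delta> t \<bullet> (xbi t - y))
             + (qsq H (y - xbi t) - qsq H (y - xbi (Suc t))) / \<eta>
             + \<eta> / (4 * (1 - \<eta> * \<nu>)) * ((real t)\<^sup>2 * qsq (matrix_inv H) (\<delta> t)))"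
      using \<eta>(1) by (intro sum.cong) (simp_all add: R_def gammaI_def field_simps power2_eq_square)
    ultimately show ?thesis
      by (simp add: S_def sum.distrib sum_distrib_left sum_divide_distrib[symmetric]) (simp only: minus_divide_left minus_diff_eq)
  qed
  finally have "real m * (real m + 1) / 2 * V (Suc m) \<le> - S" .
  moreover have "0 < real m * (real m + 1)"
    using m by simp
  ultimately have "V (Suc m) \<le> - (2 / (real m * (real m + 1)) * S)"
    by (simp add: field_simps)
  then show ?thesis
    unfolding V_def S_def \<delta>_def .
qed

section \<open>The outer ALM step\<close>

lemma qsq_diff_gram: "qsq (M - \<beta> *\<^sub>R (transpose A ** A)) v = qsq M v - \<beta> * ((A *v v) \<bullet> (A *v v))"
  by (simp add: qsq_eq_qinner qinner_diff_matrix qinner_scaleR_matrix qinner_transpose_mult_self)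

lemma qsq_nonneg_if_psd_diff_gram:
  assumes "psd (M - \<beta> *\<^sub>R (transpose A ** A))" and "\<beta> \<ge> 0"
  shows "0 \<le> qsq M v"
proof -
  have "0 \<le> qsq (M - \<beta> *\<^sub>R (transpose A ** A)) v"
    using assms(1) by (simp add: psd_def)
  moreover have "0 \<le> \<beta> * ((A *v v) \<bullet> (A *v v))"
    using assms(2) by simp
  ultimately show ?thesis
    by (simp add: qsq_diff_gram)
qed

lemma asalm_iterates_in:
  fixes x xb :: "nat \<Rightarrow> 'a::real_vector"
  assumes X: "convex X" and x0: "x 0 \<in> X" "xb 0 = x 0"
    and in1: "\<And>l. xi l 1 = x l" "\<And>l. xbi l 1 = xb l"
    and xbstep: "\<And>l t. 1 \<le> t \<Longrightarrow> t \<le> m l \<Longrightarrow> xbi l (Suc t) \<in> X"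
    and xstep: "\<And>l t. 1 \<le> t \<Longrightarrow> t \<le> m l \<Longrightarrow>
        xi l (Suc t) = betaI t *\<^sub>R xbi l (Suc t) + (1 - betaI t) *\<^sub>R xi l t"
    and out: "\<And>l. x (Suc l) = xi l (m l + 1)" "\<And>l. xb (Suc l) = xbi l (m l + 1)"
  shows "x l \<in> X \<and> xb l \<in> X"
proof (induction l)
  case (Suc l)
  then have "xi l 1 \<in> X" "xbi l 1 \<in> X"
    using in1 by simp_all
  from xsub_iterates_in[OF X this xbstep xstep, where m = "m l" and t = "Suc (m l)"]
  show ?case
    using out by simp
qed (use x0 in simp)

text \<open>Pure algebra: with \<open>w = \<mu> - \<lambda>\<^sup>k\<close> and \<open>Q = A x\<^sub>1 - b\<close>, the multiplier parts of the two
  weighted norms collapse to \<open>2 w\<cdot>Q + 2\<beta> Q\<cdot>Q\<close> (the step size \<open>s\<close> cancels), and the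
  \<open>\<beta> A\<^sup>TA\<close> part of \<open>D\<^sub>k\<close> absorbs the augmented-Lagrangian terms of \<open>h\<^sup>k\<close>.\<close>

lemma alm_gap_inequality:
  fixes A :: "real^'n1^'n" and M :: "real^'n1^'n1" and y x1 xk :: "real^'n1" and b \<mu> lk :: "real^'n"
  assumes symM: "transpose M = M" and \<beta>: "\<beta> > 0" and s: "s > 0"
    and gap: "Fx1 + (transpose A *v (\<beta> *\<^sub>R (A *v xk - b) - lk)) \<bullet> x1 + 1/2 * qsq M (x1 - xk)
                - (Fy + (transpose A *v (\<beta> *\<^sub>R (A *v xk - b) - lk)) \<bullet> y + 1/2 * qsq M (y - xk))
                + 1/2 * qsq M (y - x1) \<le> - \<zeta>"
  shows "Fy - Fx1
         + ((y - x1) \<bullet> (- (transpose A *v \<mu>)) + (\<mu> - (lk - \<beta> *\<^sub>R (A *v x1 - b))) \<bullet> (A *v y - b))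
       \<ge> 1/2 * ( (qsq (M - \<beta> *\<^sub>R (transpose A ** A)) (y - x1)
                    + 1 / (s * \<beta>) * norm (\<mu> - (lk - (s * \<beta>) *\<^sub>R (A *v x1 - b)))^2)
                 - (qsq (M - \<beta> *\<^sub>R (transpose A ** A)) (y - xk) + 1 / (s * \<beta>) * norm (\<mu> - lk)^2)
                 + (qsq (M - \<beta> *\<^sub>R (transpose A ** A)) (xk - x1)
                    + (2 - s) / \<beta> * norm (lk - (lk - \<beta> *\<^sub>R (A *v x1 - b)))^2) )
         + \<zeta>"
proof -
  define P Q R w where "P = A *v y - b" and "Q = A *v x1 - b" and "R = A *v xk - b" and "w = \<mu> - lk"
  have Av: "A *v y = P + b" "A *v x1 = Q + b" "A *v xk = R + b"
    by (simp_all add: P_def Q_def R_def)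
  have vector_matrix_inner: "(u v* A) \<bullet> v = u \<bullet> (A *v v)" for u v
    by (rule dot_lmul_matrix)
  have inner_vector_matrix: "v \<bullet> (u v* A) = u \<bullet> (A *v v)" for u v
    by (metis dot_lmul_matrix inner_commute)
  have M3: "1/2 * qsq M (y - xk) - 1/2 * qsq M (x1 - xk) - 1/2 * qsq M (y - x1)
      = 1/2 * qsq M (xk - x1) - 1/2 * qsq M (y - x1) + 1/2 * qsq M (y - xk) - qsq M (xk - x1)"
    by (simp add: qsq_eq_qinner qinner_commute[OF symM] algebra_simps)
  have norm_new: "norm (\<mu> - (lk - (s * \<beta>) *\<^sub>R Q))^2 = (norm w)^2 + 2 * (s * \<beta>) * (w \<bullet> Q) + (s * \<beta>)^2 * (Q \<bullet> Q)"
    unfolding power2_norm_eq_inner w_def by (simp add: algebra_simps power2_eq_square inner_commute)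
  have norm_step: "norm (lk - (lk - \<beta> *\<^sub>R Q))^2 = \<beta>^2 * (Q \<bullet> Q)"
    by (simp add: power2_eq_square flip: power2_norm_eq_inner)
  have multiplier: "1 / (s * \<beta>) * ((norm w)^2 + 2 * (s * \<beta>) * (w \<bullet> Q) + (s * \<beta>)^2 * (Q \<bullet> Q))
        - 1 / (s * \<beta>) * (norm w)^2 + (2 - s) / \<beta> * (\<beta>^2 * (Q \<bullet> Q))
      = 2 * (w \<bullet> Q) + 2 * \<beta> * (Q \<bullet> Q)"
    using \<beta> s by (simp add: field_simps power2_eq_square)
  have linear: "(y - x1) \<bullet> (- (transpose A *v \<mu>)) + (\<mu> - (lk - \<beta> *\<^sub>R Q)) \<bullet> P
      + \<beta>/2 * ((A *v (y - x1)) \<bullet> (A *v (y - x1)) - (A *v (y - xk)) \<bullet> (A *v (y - xk))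
               + (A *v (xk - x1)) \<bullet> (A *v (xk - x1)))
      - 1/2 * (2 * (w \<bullet> Q) + 2 * \<beta> * (Q \<bullet> Q))
      = (transpose A *v (\<beta> *\<^sub>R R - lk)) \<bullet> y - (transpose A *v (\<beta> *\<^sub>R R - lk)) \<bullet> x1"
    unfolding w_def
    by (simp add: vector_matrix_inner inner_vector_matrix Av algebra_simps inner_commute)
  show ?thesis
    using gap M3 multiplier linear
    unfolding qsq_diff_gram P_def[symmetric] Q_def[symmetric] R_def[symmetric] norm_new norm_step w_def[symmetric]
    by (simp add: algebra_simps)
qed

theorem theorem4p3:
  fixes X :: "(real^'n1) set" and U :: "(real^'n1) set"
    and A :: "real^'n1^'n" and b :: "real^'n"
    and N :: nat and f :: "nat \<Rightarrow> real^'n1 \<Rightarrow> real" and gf :: "nat \<Rightarrow> real^'n1 \<Rightarrow> real^'n1"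
    and H :: "real^'n1^'n1" and \<nu> :: real
    and \<beta> :: real and s :: real
    and m :: "nat \<Rightarrow> nat" and \<eta> :: "nat \<Rightarrow> real" and M :: "nat \<Rightarrow> real^'n1^'n1"
    and \<xi> :: "nat \<Rightarrow> nat \<Rightarrow> nat" and e :: "nat \<Rightarrow> nat \<Rightarrow> real^'n1"
    and x :: "nat \<Rightarrow> real^'n1" and xb :: "nat \<Rightarrow> real^'n1" and lam :: "nat \<Rightarrow> real^'n"
    and xi :: "nat \<Rightarrow> nat \<Rightarrow> real^'n1" and xbi :: "nat \<Rightarrow> nat \<Rightarrow> real^'n1"
    and xh :: "nat \<Rightarrow> nat \<Rightarrow> real^'n1" and d :: "nat \<Rightarrow> nat \<Rightarrow> real^'n1"
    and k :: nat
  assumes X: "X \<noteq> {}" "closed X" "convex X"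
    and U: "open U" "X \<subseteq> U"
    and N: "N \<ge> 1"
    and fconv: "\<And>j. j \<in> {1..N} \<Longrightarrow> convex_on U (f j)"
    and fgrad: "\<And>j y. j \<in> {1..N} \<Longrightarrow> y \<in> U \<Longrightarrow> (f j has_derivative (\<lambda>h. gf j y \<bullet> h)) (at y)"
    and fC1: "\<And>j. j \<in> {1..N} \<Longrightarrow> continuous_on U (gf j)"
    and H: "sym_pd H" and \<nu>: "\<nu> > 0"
    and Lip: "\<And>j y1 y2. j \<in> {1..N} \<Longrightarrow> y1 \<in> X \<Longrightarrow> y2 \<in> X \<Longrightarrow>
              qnorm (matrix_inv H) (gf j y1 - gf j y2) \<le> \<nu> * qnorm H (y1 - y2)"
    and \<beta>: "\<beta> > 0" and s: "0 < s" "s \<le> 2"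
    and mk: "\<And>l. m l \<ge> 1" and \<eta>pos: "\<And>l. \<eta> l > 0"
    and Msym: "\<And>l. transpose (M l) = M l"
    and Dpsd: "\<And>l. psd (M l - \<beta> *\<^sub>R (transpose A ** A))"
    and x0: "x 0 \<in> X" and xb0: "xb 0 = x 0"
    and \<xi>: "\<And>l t. \<xi> l t \<in> {1..N}"
    and in1: "\<And>l. xi l 1 = x l" "\<And>l. xbi l 1 = xb l"
    and xh: "\<And>l t. xh l t = betaI t *\<^sub>R xbi l t + (1 - betaI t) *\<^sub>R xi l t"
    and dd: "\<And>l t. d l t = gf (\<xi> l t) (xh l t) + e l t"
    and xbstep: "\<And>l t. 1 \<le> t \<Longrightarrow> t \<le> m l \<Longrightarrow>
        xbi l (Suc t) \<in> X \<and>
        (\<forall>z\<in>X. (d l t + transpose A *v (\<beta> *\<^sub>R (A *v x l - b) - lam l)) \<bullet> xbi l (Suc t)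
                  + gammaI (\<eta> l) t / 2 * qsq H (xbi l (Suc t) - xbi l t)
                  + 1/2 * qsq (M l) (xbi l (Suc t) - x l)
               \<le> (d l t + transpose A *v (\<beta> *\<^sub>R (A *v x l - b) - lam l)) \<bullet> z
                  + gammaI (\<eta> l) t / 2 * qsq H (z - xbi l t)
                  + 1/2 * qsq (M l) (z - x l))"
    and xstep: "\<And>l t. 1 \<le> t \<Longrightarrow> t \<le> m l \<Longrightarrow>
        xi l (Suc t) = betaI t *\<^sub>R xbi l (Suc t) + (1 - betaI t) *\<^sub>R xi l t"
    and out: "\<And>l. x (Suc l) = xi l (m l + 1)" "\<And>l. xb (Suc l) = xbi l (m l + 1)"
    and lamstep: "\<And>l. lam (Suc l) = lam l - (s * \<beta>) *\<^sub>R (A *v x (Suc l) - b)"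
    and \<eta>k: "\<eta> k < 1 / \<nu>"
  shows "\<forall>y\<in>X. \<forall>\<mu>::real^'n.
    let F = (\<lambda>z. (1 / real N) * (\<Sum>j=1..N. f j z));
        gF = (\<lambda>z. (1 / real N) *\<^sub>R (\<Sum>j=1..N. gf j z));
        \<delta> = (\<lambda>t. gF (xh k t) - d k t);
        D = M k - \<beta> *\<^sub>R (transpose A ** A);
        lt = lam k - \<beta> *\<^sub>R (A *v x (Suc k) - b);
        \<zeta> = 2 / (real (m k) * (real (m k) + 1)) *
             ( 1 / \<eta> k * (qsq H (y - xb (Suc k)) - qsq H (y - xb k))
               - (\<Sum>t=1..m k. real t * (\<delta> t \<bullet> (xbi k t - y)))
               - \<eta> k / (4 * (1 - \<eta> k * \<nu>)) * (\<Sum>t=1..m k. (real t)^2 * qsq (matrix_inv H) (\<delta> t)))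
    in F y - F (x (Suc k))
         + ((y - x (Suc k)) \<bullet> (- (transpose A *v \<mu>)) + (\<mu> - lt) \<bullet> (A *v y - b))
       \<ge> 1/2 * ( (qsq D (y - x (Suc k)) + 1 / (s * \<beta>) * norm (\<mu> - lam (Suc k))^2)
                 - (qsq D (y - x k) + 1 / (s * \<beta>) * norm (\<mu> - lam k)^2)
                 + (qsq D (x k - x (Suc k)) + (2 - s) / \<beta> * norm (lam k - lt)^2) )
         + \<zeta>"
proof -
  define F where "F z = (1 / real N) * (\<Sum>j=1..N. f j z)" for z
  define gF where "gF z = (1 / real N) *\<^sub>R (\<Sum>j=1..N. gf j z)" for z
  have grad: "F u + gF u \<bullet> (z - u) \<le> F z" if "u \<in> X" "z \<in> X" for u z
    unfolding F_def gF_def using that U(2)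
    by (intro affine_le_mean convex_on_gradient_ineq[OF fconv] fgrad) auto
  have desc: "F z \<le> F u + gF u \<bullet> (z - u) + \<nu>/2 * qsq H (z - u)" if "u \<in> X" "z \<in> X" for u z
    unfolding F_def gF_def using that U(2)
    by (intro mean_le_affine[OF N] descent_lemma[OF X(3) _ H \<nu> Lip] fgrad) auto
  have "x k \<in> X \<and> xb k \<in> X"
    by (rule asalm_iterates_in[where m = m, OF X(3) x0 xb0 in1 conjunct1[OF xbstep] xstep out])
  then have start: "xi k 1 \<in> X" "xbi k 1 \<in> X"
    using in1 by simp_all
  have \<eta>\<nu>: "\<eta> k * \<nu> < 1"
    using \<eta>k \<nu> by (simp add: field_simps)
  have Mpsd: "0 \<le> qsq (M k) v" for v
    using Dpsd \<beta> by (intro qsq_nonneg_if_psd_diff_gram) auto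
  have "xi k (Suc (m k)) = x (Suc k)" "xbi k (Suc (m k)) = xb (Suc k)"
    using out by simp_all
  note gap = xsub_gap_bound[OF X(3) grad desc H \<nu> Msym[of k] Mpsd \<eta>pos[of k] \<eta>\<nu> mk[of k] start xh[of k]
      xbstep[of _ k] xstep[of _ k], unfolded this in1 F_def gF_def]
  show ?thesis
    unfolding Let_def lamstep by (intro ballI allI alm_gap_inequality[OF Msym \<beta> s(1)] gap)
qed

end
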